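(* Let $\mathcal H$ be a Hilbert space, let $\mathfrak H\subset\mathcal H$ be a closed subspace, $\mathfrak N=\mathcal H\ominus\mathfrak H$, and let $A_0:\mathfrak H\to\mathcal H$ be a Hermitian contraction with ${\rm dom}\,A_0=\mathfrak H$. Let $T$ be a qsc-extension of $A_0$ in $\mathcal H$ and let $\tau=\{T;\mathfrak N,\mathfrak N,\mathfrak H\}$ be the pqs-system given by the block decomposition of $T$ with respect to $\mathcal H=\mathfrak N\oplus\mathfrak H$. Then the following are equivalent: (i) $A_0$ is simple; (ii) $T$ is $\mathfrak N$-minimal; (iii) $\tau$ is minimal.
   Context: $A_0$ Hermitian means $(A_0f,g)=(f,A_0g)$ for $f,g\in{\rm dom}\,A_0$. $A_0$ is simple if there is no nonzero subspace of ${\rm dom}\,A_0$ invariant under $A_0$ (i.e. $A_0$ has no selfadjoint part). A quasi-selfadjoint contraction (qsc-operator) is a contraction $T\in\mathbf L(\mathcal H)$ with ${\rm ker}(T-T^* )\neq\{0\}$; $T$ is a qsc-extension of $A_0$ if $A_0\subset T$ and $A_0\subset T^*$ (equivalently ${\rm dom}\,A_0\subset{\rm ker}(T-T^* )$, so ${\rm ran}(T-T^* )\subset\mathfrak N$). $T$ is $\mathfrak N$-minimal if $\overline{\rm span}\{T^n\mathfrak N:n\ge0\}=\mathcal H$. A pqs-system $\{T;\mathfrak N,\mathfrak N,\mathfrak H\}$ has $T=\begin{pmatrix}D&C\\ B&A\end{pmatrix}:\mathfrak N\oplus\mathfrak H\to\mathfrak N\oplus\mathfrak H$ contractive with ${\rm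 ran}(T-T^* )\subset\mathfrak N$; minimal means $\overline{\rm span}\{A^nB\mathfrak N\}=\mathfrak H=\overline{\rm span}\{A^{*n}C^*\mathfrak N\}$. *)

theory Defs
  imports "HOL-Analysis.Analysis"
begin

class complex_vector = real_vector +
  fixes scaleC :: "complex \<Rightarrow> 'a \<Rightarrow> 'a" (infixr \<open>*\<^sub>C\<close> 75)
  assumes scaleC_add_right: "a *\<^sub>C (x + y) = a *\<^sub>C x + a *\<^sub>C y"
    and scaleC_add_left: "(a + b) *\<^sub>C x = a *\<^sub>C x + b *\<^sub>C x"
    and scaleC_scaleC: "a *\<^sub>C (b *\<^sub>C x) = (a * b) *\<^sub>C x"
    and scaleC_one: "1 *\<^sub>C x = x"
    and scaleR_scaleC: "scaleR r = scaleC (complex_of_real r)"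

class complex_normed_vector = complex_vector + real_normed_vector +
  assumes norm_scaleC: "norm (a *\<^sub>C x) = cmod a * norm x"

class complex_inner = complex_normed_vector +
  fixes cinner :: "'a \<Rightarrow> 'a \<Rightarrow> complex"
  assumes cinner_commute: "cinner x y = cnj (cinner y x)"
    and cinner_add_left: "cinner (x + y) z = cinner x z + cinner y z"
    and cinner_scaleC_left: "cinner (a *\<^sub>C x) y = cnj a * cinner x y"
    and cinner_self_real: "Im (cinner x x) = 0"
    and cinner_self_nonneg: "0 \<le> Re (cinner x x)"
    and cinner_self_eq_zero: "cinner x x = 0 \<longleftrightarrow> x = 0"
    and norm_eq_sqrt_cinner: "norm x = sqrt (Re (cinner x x))"

class chilbert_space = complex_inner + complete_space

definition csubspace :: "'a::complex_vector set \<Rightarrow> bool" where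
  "csubspace S = module.subspace (scaleC :: complex \<Rightarrow> 'a \<Rightarrow> 'a) S"

definition cspan :: "'a::complex_vector set \<Rightarrow> 'a set" where
  "cspan S = module.span (scaleC :: complex \<Rightarrow> 'a \<Rightarrow> 'a) S"

definition closed_csubspace :: "'a::complex_normed_vector set \<Rightarrow> bool" where
  "closed_csubspace S \<longleftrightarrow> csubspace S \<and> closed S"

definition orthogonal_complement :: "'a::complex_inner set \<Rightarrow> 'a set" where
  "orthogonal_complement S = {x. \<forall>y\<in>S. cinner y x = 0}"

text \<open>Orthogonal projection onto a closed subspace M (well defined by the projection theorem).\<close>
definition oproj :: "'a::complex_inner set \<Rightarrow> 'a \<Rightarrow> 'a" where
  "oproj M x = (THE y. y \<in> M \<and> x - y \<in> orthogonal_complement M)"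

definition clinear :: "('a::complex_vector \<Rightarrow> 'b::complex_vector) \<Rightarrow> bool" where
  "clinear T \<longleftrightarrow> (\<forall>x y. T (x + y) = T x + T y) \<and> (\<forall>c x. T (c *\<^sub>C x) = c *\<^sub>C T x)"

definition contraction :: "('a::complex_normed_vector \<Rightarrow> 'a) \<Rightarrow> bool" where
  "contraction T \<longleftrightarrow> clinear T \<and> (\<forall>x. norm (T x) \<le> norm x)"

definition is_adjoint :: "('a::complex_inner \<Rightarrow> 'a) \<Rightarrow> ('a \<Rightarrow> 'a) \<Rightarrow> bool" where
  "is_adjoint T Ts \<longleftrightarrow> (\<forall>x y. cinner (T x) y = cinner x (Ts y))"

text \<open>Hermitian contraction A0 : dom A0 = D \<rightarrow> H (values of A0 outside D are irrelevant).\<close>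
definition hermitian_contraction_on :: "'a::complex_inner set \<Rightarrow> ('a \<Rightarrow> 'a) \<Rightarrow> bool" where
  "hermitian_contraction_on D A0 \<longleftrightarrow>
     (\<forall>x\<in>D. \<forall>y\<in>D. A0 (x + y) = A0 x + A0 y) \<and>
     (\<forall>c. \<forall>x\<in>D. A0 (c *\<^sub>C x) = c *\<^sub>C A0 x) \<and>
     (\<forall>x\<in>D. norm (A0 x) \<le> norm x) \<and>
     (\<forall>f\<in>D. \<forall>g\<in>D. cinner (A0 f) g = cinner f (A0 g))"

definition simple_on :: "'a::complex_vector set \<Rightarrow> ('a \<Rightarrow> 'a) \<Rightarrow> bool" where
  "simple_on D A0 \<longleftrightarrow>
     \<not> (\<exists>L. csubspace L \<and> L \<subseteq> D \<and> L \<noteq> {0} \<and> A0 ` L \<subseteq> L)"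

definition qsc_operator :: "('a::complex_inner \<Rightarrow> 'a) \<Rightarrow> ('a \<Rightarrow> 'a) \<Rightarrow> bool" where
  "qsc_operator T Ts \<longleftrightarrow> contraction T \<and> {x. T x = Ts x} \<noteq> {0}"

definition qsc_extension :: "('a::complex_inner \<Rightarrow> 'a) \<Rightarrow> ('a \<Rightarrow> 'a) \<Rightarrow> 'a set \<Rightarrow> ('a \<Rightarrow> 'a) \<Rightarrow> bool" where
  "qsc_extension T Ts D A0 \<longleftrightarrow> qsc_operator T Ts \<and> (\<forall>f\<in>D. T f = A0 f \<and> Ts f = A0 f)"

definition N_minimal :: "('a::complex_normed_vector \<Rightarrow> 'a) \<Rightarrow> 'a set \<Rightarrow> bool" where
  "N_minimal T N \<longleftrightarrow> closure (cspan {(T ^^ n) x | n x. x \<in> N}) = UNIV"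

text \<open>Minimality of the pqs-system {T; N, N, H'} with H = N \<oplus> H', where
  T = [[D, C], [B, A]]: A = P_H' T|H', B = P_H' T|N, C = P_N T|H', hence
  A* = P_H' T*|H' and C* = P_H' T*|N.\<close>
definition pqs_minimal :: "('a::complex_inner \<Rightarrow> 'a) \<Rightarrow> ('a \<Rightarrow> 'a) \<Rightarrow> 'a set \<Rightarrow> 'a set \<Rightarrow> bool" where
  "pqs_minimal T Ts N K \<longleftrightarrow>
     (let A = (\<lambda>x. oproj K (T x)); B = (\<lambda>x. oproj K (T x));
          Aadj = (\<lambda>x. oproj K (Ts x)); Cadj = (\<lambda>x. oproj K (Ts x))
      in closure (cspan {(A ^^ n) (B x) | n x. x \<in> N}) = K \<and>
         closure (cspan {(Aadj ^^ n) (Cadj x) | n x. x \<in> N}) = K)"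

end

theory Submission
  imports Defs
begin

(*
  The proof reduces all three conditions to statements about the "trapped" vectors of an
  operator U, i.e. the vectors h whose whole orbit h, U h, U^2 h, ... stays inside K:
   (1) The trapped vectors of Ts are exactly the vectors orthogonal to the T-orbit of N
       (because K = N-perp), so T is N-minimal iff Ts traps only 0.
   (2) Since Ts = A0 on K, the trapped vectors of Ts form the largest A0-invariant subspace
       of K, so A0 is simple iff Ts traps only 0; by symmetry (T = A0 on K as well) also
       iff T traps only 0.
   (3) The compressions P_K T and P_K Ts are mutually adjoint on K, and their orbits agree
       with those of T and Ts as long as these stay in K; hence each of the two density
       conditions defining pqs-minimality is equivalent to T resp. Ts trapping only 0.
  Before that, the file develops the Hilbert-space facts the argument relies on: elementary
  inner-product algebra, the projection theorem, and the density criterion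
  "closure (cspan S) = Q iff S \<subseteq> Q and no nonzero vector of Q is orthogonal to S".
  Only the extension property T = Ts = A0 on K and the adjointness of T and Ts enter the
  argument.
*)

section \<open>Inner-product algebra\<close>

lemma module_scaleC: "module (scaleC :: complex \<Rightarrow> 'a::complex_vector \<Rightarrow> 'a)"
  by unfold_locales (simp_all add: scaleC_add_right scaleC_add_left scaleC_scaleC scaleC_one)

lemma cinner_zero_left [simp]: "cinner 0 y = 0"
  using cinner_add_left[of 0 0 y] by simp

lemma cinner_zero_right [simp]: "cinner y 0 = 0"
  by (subst cinner_commute) simp

lemma cinner_eq_zero_sym: "cinner x y = 0 \<longleftrightarrow> cinner y x = 0"
  by (metis cinner_commute complex_cnj_zero_iff)

lemma cinner_add_right: "cinner x (y + z) = cinner x y + cinner x z"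
  by (metis cinner_add_left cinner_commute complex_cnj_add)

lemma cinner_scaleC_right: "cinner x (a *\<^sub>C y) = a * cinner x y"
  by (metis cinner_commute cinner_scaleC_left complex_cnj_cnj complex_cnj_mult)

lemma cinner_diff_left: "cinner (x - y) z = cinner x z - cinner y z"
  using cinner_add_left[of "x - y" y z] by simp

lemma cinner_diff_right: "cinner x (y - z) = cinner x y - cinner x z"
  by (metis cinner_commute cinner_diff_left complex_cnj_diff)

lemma cinner_self: "cinner x x = complex_of_real ((norm x)\<^sup>2)"
proof -
  have "(norm x)\<^sup>2 = Re (cinner x x)"
    using norm_eq_sqrt_cinner[of x] cinner_self_nonneg[of x] by simp
  then show ?thesis using cinner_self_real[of x] by (simp add: complex_eq_iff)
qed

lemma norm_sq_add: "(norm (x + y))\<^sup>2 = (norm x)\<^sup>2 + (norm y)\<^sup>2 + 2 * Re (cinner x y)"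
proof -
  have "complex_of_real ((norm (x + y))\<^sup>2) = cinner x x + cinner x y + cinner y x + cinner y y"
    by (simp only: cinner_self[symmetric] cinner_add_left cinner_add_right) (simp add: ac_simps)
  then have "(norm (x + y))\<^sup>2 = Re (cinner x x) + Re (cinner x y) + Re (cinner y x) + Re (cinner y y)"
    by (metis Re_complex_of_real plus_complex.sel(1))
  moreover have "Re (cinner y x) = Re (cinner x y)"
    by (subst cinner_commute) simp
  ultimately show ?thesis by (simp add: cinner_self)
qed

lemma norm_sq_diff: "(norm (x - y))\<^sup>2 = (norm x)\<^sup>2 + (norm y)\<^sup>2 - 2 * Re (cinner x y)"
  using norm_sq_add[of x "- y"] cinner_diff_right[of x 0 y] by simp

text \<open>Vectors orthogonal to a fixed vector form a closed set (polarization expresses the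
  inner product through norms).\<close>
lemma closed_orthogonal_to: "closed {y. cinner y h = 0}"
proof -
  have Re_polar: "Re (cinner y g) = ((norm (y + g))\<^sup>2 - (norm (y - g))\<^sup>2) / 4" for y g :: 'a
    by (simp add: norm_sq_add norm_sq_diff)
  have "{y. cinner y h = 0} = {y. ((norm (y + h))\<^sup>2 - (norm (y - h))\<^sup>2) / 4 = 0}
      \<inter> {y. ((norm (y + \<i> *\<^sub>C h))\<^sup>2 - (norm (y - \<i> *\<^sub>C h))\<^sup>2) / 4 = 0}"
    by (auto simp: Re_polar[symmetric] cinner_scaleC_right complex_eq_iff)
  also have "closed \<dots>"
    by (intro closed_Int closed_Collect_eq continuous_intros) auto
  finally show ?thesis .
qed

section \<open>Complex subspaces and spans\<close>

lemma csubspace_iff: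
  "csubspace S \<longleftrightarrow> 0 \<in> S \<and> (\<forall>x\<in>S. \<forall>y\<in>S. x + y \<in> S) \<and> (\<forall>c. \<forall>x\<in>S. c *\<^sub>C x \<in> S)"
  unfolding csubspace_def module.subspace_def[OF module_scaleC] by simp

lemma cspan_superset: "S \<subseteq> cspan S"
  unfolding cspan_def by (rule module.span_superset[OF module_scaleC])

lemma csubspace_cspan: "csubspace (cspan S)"
  unfolding cspan_def csubspace_def by (rule module.subspace_span[OF module_scaleC])

lemma cspan_minimal: "S \<subseteq> T \<Longrightarrow> csubspace T \<Longrightarrow> cspan S \<subseteq> T"
  unfolding cspan_def csubspace_def by (rule module.span_minimal[OF module_scaleC])

lemma csubspace_scaleR: "csubspace M \<Longrightarrow> x \<in> M \<Longrightarrow> r *\<^sub>R x \<in> M"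
  by (simp add: csubspace_iff scaleR_scaleC)

lemma csubspace_diff: "csubspace M \<Longrightarrow> x \<in> M \<Longrightarrow> y \<in> M \<Longrightarrow> x - y \<in> M"
  using csubspace_scaleR[of M y "-1"] by (simp add: csubspace_iff) (metis diff_conv_add_uminus)

lemma csubspace_convex: "csubspace M \<Longrightarrow> convex M"
  unfolding convex_def by (simp add: csubspace_iff csubspace_scaleR)

lemma csubspace_orthogonal_to: "csubspace {y. cinner y h = 0}"
  by (simp add: csubspace_iff cinner_add_left cinner_scaleC_left)

lemma csubspace_orthogonal_to_set: "csubspace {h. \<forall>s\<in>S. cinner s h = 0}"
  by (simp add: csubspace_iff cinner_add_right cinner_scaleC_right)

lemma csubspace_orthogonal_complement: "csubspace (orthogonal_complement S)"
  unfolding orthogonal_complement_def by (rule csubspace_orthogonal_to_set)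

lemma closure_csubspace:
  fixes S :: "'a::complex_normed_vector set"
  assumes "csubspace S"
  shows "csubspace (closure S)"
proof -
  have add: "(\<lambda>(x, y). x + y) ` (closure S \<times> closure S) \<subseteq> closure S"
  proof -
    have "(\<lambda>(x, y). x + y) ` closure (S \<times> S) \<subseteq> closure ((\<lambda>(x, y). x + y) ` (S \<times> S))"
      by (intro image_closure_subset closure_subset)
        (auto simp: case_prod_beta intro!: continuous_on_add continuous_on_fst continuous_on_snd continuous_on_id)
    also have "\<dots> \<subseteq> closure S"
      using assms by (intro closure_mono) (auto simp: csubspace_iff)
    finally show ?thesis by (simp add: closure_Times)
  qed
  have scale: "(*\<^sub>C) c ` closure S \<subseteq> closure S" for c
  proof -
    have lin: "bounded_linear ((*\<^sub>C) c :: 'a \<Rightarrow> 'a)"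
      by (rule bounded_linear_intro[where K = "cmod c"])
        (simp_all add: scaleC_add_right scaleR_scaleC scaleC_scaleC mult.commute norm_scaleC)
    have "(*\<^sub>C) c ` closure S \<subseteq> closure ((*\<^sub>C) c ` S)"
      by (intro image_closure_subset closure_subset closed_closure linear_continuous_on lin)
    also have "\<dots> \<subseteq> closure S"
      using assms by (intro closure_mono) (auto simp: csubspace_iff)
    finally show ?thesis .
  qed
  have "0 \<in> closure S" using assms closure_subset by (auto simp: csubspace_iff)
  then show ?thesis using add scale by (auto simp: csubspace_iff)
qed

section \<open>The projection theorem\<close>

text \<open>If no multiple of m brings z closer to 0, then m is orthogonal to z: the first-order
  condition for a minimum of the distance.\<close>
lemma orthogonal_if_nearest:
  fixes z m :: "'a::complex_inner"
  assumes "\<And>t. (norm z)\<^sup>2 \<le> (norm (z - t *\<^sub>C m))\<^sup>2"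
  shows "cinner m z = 0"
proof -
  define c where "c = cinner m z"
  define a where "a = (norm m)\<^sup>2"
  define s where "s = 1 / (a + 1)"
  define q where "q = (cmod c)\<^sup>2"
  have a0: "a \<ge> 0" and q0: "q \<ge> 0" unfolding a_def q_def by simp_all
  then have s0: "s > 0" and sa: "s * a < 1" unfolding s_def by simp_all
  let ?t = "complex_of_real s * c"
  have "cinner z (?t *\<^sub>C m) = complex_of_real s * (c * cnj c)"
    by (simp add: cinner_scaleC_right c_def cinner_commute[of m z])
  then have re: "Re (cinner z (?t *\<^sub>C m)) = s * q"
    by (simp add: q_def complex_norm_square[symmetric])
  have "(norm (?t *\<^sub>C m))\<^sup>2 = s\<^sup>2 * q * a"
    using s0 by (simp add: norm_scaleC q_def a_def norm_mult power_mult_distrib)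
  then have "0 \<le> s * q * (s * a - 2)"
    using assms[of ?t] norm_sq_diff[of z "?t *\<^sub>C m"] re by (simp add: algebra_simps power2_eq_square)
  moreover have "s * q * (s * a - 2) \<le> 0"
    using s0 q0 sa by (intro mult_nonneg_nonpos) auto
  ultimately have "q = 0" using s0 sa by (auto simp: mult_eq_0_iff)
  then show ?thesis unfolding q_def c_def by simp
qed

lemma parallelogram_midpoint:
  fixes x a b :: "'a::complex_inner"
  shows "(norm (a - b))\<^sup>2 = 2 * (norm (x - a))\<^sup>2 + 2 * (norm (x - b))\<^sup>2
                            - 4 * (norm (x - (1/2) *\<^sub>R (a + b)))\<^sup>2"
proof -
  have "x - a + (x - b) = 2 *\<^sub>R (x - (1/2) *\<^sub>R (a + b))"
    by (simp add: algebra_simps scaleR_2)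
  then have "(norm (x - a + (x - b)))\<^sup>2 = 4 * (norm (x - (1/2) *\<^sub>R (a + b)))\<^sup>2"
    by (simp add: power_mult_distrib)
  moreover have "(norm (x - a - (x - b)))\<^sup>2 = (norm (a - b))\<^sup>2"
    by (simp add: norm_minus_commute)
  moreover have "(norm (u + v))\<^sup>2 + (norm (u - v))\<^sup>2 = 2 * (norm u)\<^sup>2 + 2 * (norm v)\<^sup>2"
    if "u = x - a" "v = x - b" for u v :: 'a
    by (simp add: norm_sq_add norm_sq_diff)
  note this[OF refl refl]
  ultimately show ?thesis by linarith
qed

lemma minimizing_sequence_Cauchy:
  fixes M :: "'a::complex_inner set"
  assumes "convex M" and mM: "\<And>n. m n \<in> M" and d: "\<And>w. w \<in> M \<Longrightarrow> d \<le> norm (x - w)"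
    and "0 \<le> d" and m: "\<And>n. (norm (x - m n))\<^sup>2 < d\<^sup>2 + inverse (real (Suc n))"
  shows "Cauchy m"
proof (rule metric_CauchyI)
  have close: "(norm (m a - m b))\<^sup>2 \<le> 2 * inverse (real (Suc a)) + 2 * inverse (real (Suc b))"
    for a b
  proof -
    have "(1/2) *\<^sub>R (m a + m b) \<in> M"
      using \<open>convex M\<close> mM convexD[of M "m a" "m b" "1/2" "1/2"] by (simp add: scaleR_add_right)
    then have "d\<^sup>2 \<le> (norm (x - (1/2) *\<^sub>R (m a + m b)))\<^sup>2"
      using d \<open>0 \<le> d\<close> power_mono by blast
    then show ?thesis
      using parallelogram_midpoint[of "m a" "m b" x] m[of a] m[of b] by linarith
  qed
  fix e :: real assume e: "e > 0"
  then obtain N where N: "inverse (real (Suc N)) < e\<^sup>2 / 4"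
    using reals_Archimedean[of "e\<^sup>2 / 4"] by auto
  show "\<exists>N. \<forall>a\<ge>N. \<forall>b\<ge>N. dist (m a) (m b) < e"
  proof (intro exI allI impI)
    fix a b assume "N \<le> a" "N \<le> b"
    then have "inverse (real (Suc a)) \<le> inverse (real (Suc N))"
      and "inverse (real (Suc b)) \<le> inverse (real (Suc N))"
      by (simp_all add: le_imp_inverse_le)
    then have "(norm (m a - m b))\<^sup>2 < e\<^sup>2" using close[of a b] N by linarith
    then show "dist (m a) (m b) < e"
      using e by (simp add: dist_norm power_less_imp_less_base)
  qed
qed

lemma nearest_point_exists:
  fixes M :: "'a::chilbert_space set"
  assumes "closed M" and "convex M" and "M \<noteq> {}"
  shows "\<exists>y\<in>M. \<forall>w\<in>M. norm (x - y) \<le> norm (x - w)"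
proof -
  define d where "d = Inf ((\<lambda>w. norm (x - w)) ` M)"
  have bdd: "bdd_below ((\<lambda>w. norm (x - w)) ` M)" by (rule bdd_belowI[of _ 0]) auto
  have d_le: "d \<le> norm (x - w)" if "w \<in> M" for w
    unfolding d_def using bdd that by (auto intro: cInf_lower)
  have d0: "0 \<le> d" unfolding d_def using \<open>M \<noteq> {}\<close> by (auto intro: cInf_greatest)
  have "\<exists>w\<in>M. (norm (x - w))\<^sup>2 < d\<^sup>2 + inverse (real (Suc n))" for n
  proof -
    define r where "r = sqrt (d\<^sup>2 + inverse (real (Suc n)))"
    have "d < r" unfolding r_def using d0 by (simp add: real_less_rsqrt)
    then obtain w where "w \<in> M" "norm (x - w) < r"
      using cInf_lessD[of "(\<lambda>w. norm (x - w)) ` M" r] \<open>M \<noteq> {}\<close> unfolding d_def by auto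
    moreover have "0 \<le> d\<^sup>2 + inverse (real (Suc n))" by simp
    ultimately show ?thesis unfolding r_def by (metis norm_ge_zero real_less_rsqrt real_sqrt_less_iff
      real_sqrt_pow2_iff real_sqrt_abs abs_norm_cancel)
  qed
  then obtain m where mM: "\<And>n. m n \<in> M"
    and m: "\<And>n. (norm (x - m n))\<^sup>2 < d\<^sup>2 + inverse (real (Suc n))"
    by metis
  have "Cauchy m"
    using minimizing_sequence_Cauchy[OF \<open>convex M\<close> mM d_le d0 m] .
  then obtain y where lim: "m \<longlonglongrightarrow> y" using Cauchy_convergent_iff convergent_def by blast
  have "y \<in> M" using \<open>closed M\<close> mM lim closed_sequentially by blast
  have "(\<lambda>n. (norm (x - m n))\<^sup>2) \<longlonglongrightarrow> (norm (x - y))\<^sup>2"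
    by (intro tendsto_intros lim)
  moreover have "(\<lambda>n. d\<^sup>2 + inverse (real (Suc n))) \<longlonglongrightarrow> d\<^sup>2 + 0"
    by (intro tendsto_intros LIMSEQ_inverse_real_of_nat)
  ultimately have "(norm (x - y))\<^sup>2 \<le> d\<^sup>2"
    using m by (auto intro: LIMSEQ_le less_imp_le)
  then have "norm (x - y) \<le> d" using d0 by (simp add: power2_le_iff_abs_le)
  then show ?thesis using \<open>y \<in> M\<close> d_le by force
qed

lemma projection_exists:
  fixes M :: "'a::chilbert_space set"
  assumes "closed_csubspace M"
  shows "\<exists>y\<in>M. x - y \<in> orthogonal_complement M"
proof -
  have sub: "csubspace M" and "closed M" using assms by (auto simp: closed_csubspace_def)
  then have "M \<noteq> {}" by (auto simp: csubspace_iff)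
  then obtain y where "y \<in> M" and y: "\<And>w. w \<in> M \<Longrightarrow> norm (x - y) \<le> norm (x - w)"
    using nearest_point_exists[OF \<open>closed M\<close> csubspace_convex[OF sub]] by blast
  have "cinner w (x - y) = 0" if "w \<in> M" for w
  proof (rule orthogonal_if_nearest)
    fix t
    have "y + t *\<^sub>C w \<in> M" using sub \<open>y \<in> M\<close> that by (simp add: csubspace_iff)
    from y[OF this] have "norm (x - y) \<le> norm (x - y - t *\<^sub>C w)"
      by (simp add: diff_diff_add)
    then show "(norm (x - y))\<^sup>2 \<le> (norm (x - y - t *\<^sub>C w))\<^sup>2"
      by (simp add: power_mono)
  qed
  then show ?thesis using \<open>y \<in> M\<close> unfolding orthogonal_complement_def by blast
qed

lemma oproj_props:
  fixes K :: "'a::chilbert_space set"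
  assumes K: "closed_csubspace K"
  shows "oproj K x \<in> K" and "x - oproj K x \<in> orthogonal_complement K"
proof -
  have sub: "csubspace K" using K by (simp add: closed_csubspace_def)
  obtain y where y: "y \<in> K" "x - y \<in> orthogonal_complement K" using projection_exists[OF K] by blast
  have unique: "z = y" if z: "z \<in> K" "x - z \<in> orthogonal_complement K" for z
  proof -
    have "z - y \<in> K" using y z csubspace_diff[OF sub] by blast
    moreover have "(x - y) - (x - z) \<in> orthogonal_complement K"
      using csubspace_diff[OF csubspace_orthogonal_complement y(2) z(2)] .
    then have "z - y \<in> orthogonal_complement K" by simp
    ultimately have "cinner (z - y) (z - y) = 0"
      unfolding orthogonal_complement_def by blast
    then show "z = y" by (metis cinner_self_eq_zero right_minus_eq)
  qed
  have "oproj K x = y" unfolding oproj_def using y unique by (intro the_equality) blast+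
  then show "oproj K x \<in> K" and "x - oproj K x \<in> orthogonal_complement K" using y by simp_all
qed

lemma oproj_id:
  fixes K :: "'a::chilbert_space set"
  assumes K: "closed_csubspace K" and "v \<in> K"
  shows "oproj K v = v"
proof -
  have "v - oproj K v \<in> K"
    using K \<open>v \<in> K\<close> oproj_props(1)[OF K] csubspace_diff by (auto simp: closed_csubspace_def)
  then have "cinner (v - oproj K v) (v - oproj K v) = 0"
    using oproj_props(2)[OF K, of v] by (simp add: orthogonal_complement_def)
  then show ?thesis by (metis cinner_self_eq_zero right_minus_eq)
qed

lemma cinner_oproj_right:
  fixes K :: "'a::chilbert_space set"
  assumes K: "closed_csubspace K" and "z \<in> K"
  shows "cinner z (oproj K y) = cinner z y"
  using oproj_props(2)[OF K, of y] \<open>z \<in> K\<close>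
  by (simp add: orthogonal_complement_def cinner_diff_right)

lemma cinner_oproj_left:
  fixes K :: "'a::chilbert_space set"
  assumes K: "closed_csubspace K" and "w \<in> K"
  shows "cinner (oproj K y) w = cinner y w"
  using cinner_oproj_right[OF assms, of y] by (metis cinner_commute)

text \<open>A closed subspace is its own double orthogonal complement.\<close>
lemma orthogonal_complement_perp_iff:
  fixes K :: "'a::chilbert_space set"
  assumes K: "closed_csubspace K"
  shows "(\<forall>x\<in>orthogonal_complement K. cinner x v = 0) \<longleftrightarrow> v \<in> K"
proof
  assume perp: "\<forall>x\<in>orthogonal_complement K. cinner x v = 0"
  let ?p = "oproj K v"
  have p: "?p \<in> K" "v - ?p \<in> orthogonal_complement K" using oproj_props[OF K] by auto
  have "cinner (v - ?p) v = 0" using perp p by blast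
  moreover have "cinner (v - ?p) ?p = 0"
    using p cinner_eq_zero_sym unfolding orthogonal_complement_def by blast
  ultimately have "cinner (v - ?p) (v - ?p) = 0" by (simp add: cinner_diff_right)
  then show "v \<in> K" using p(1) by (metis cinner_self_eq_zero right_minus_eq)
next
  assume "v \<in> K"
  then show "\<forall>x\<in>orthogonal_complement K. cinner x v = 0"
    unfolding orthogonal_complement_def by (metis (mono_tags) cinner_eq_zero_sym mem_Collect_eq)
qed

section \<open>Density criterion\<close>

lemma closure_cspan_eq_iff:
  fixes Q :: "'a::chilbert_space set"
  assumes Q: "closed_csubspace Q"
  shows "closure (cspan S) = Q \<longleftrightarrow> S \<subseteq> Q \<and> (\<forall>h\<in>Q. (\<forall>s\<in>S. cinner s h = 0) \<longrightarrow> h = 0)"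
proof
  assume eq: "closure (cspan S) = Q"
  have "h = 0" if "h \<in> Q" "\<forall>s\<in>S. cinner s h = 0" for h
  proof -
    have "cspan S \<subseteq> {y. cinner y h = 0}"
      using that(2) csubspace_orthogonal_to by (intro cspan_minimal) auto
    then have "closure (cspan S) \<subseteq> {y. cinner y h = 0}"
      using closed_orthogonal_to by (rule closure_minimal)
    then have "cinner h h = 0" using eq that(1) by blast
    then show "h = 0" by (simp add: cinner_self_eq_zero)
  qed
  then show "S \<subseteq> Q \<and> (\<forall>h\<in>Q. (\<forall>s\<in>S. cinner s h = 0) \<longrightarrow> h = 0)"
    using eq cspan_superset closure_subset by blast
next
  assume a: "S \<subseteq> Q \<and> (\<forall>h\<in>Q. (\<forall>s\<in>S. cinner s h = 0) \<longrightarrow> h = 0)"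
  have Qs: "csubspace Q" and "closed Q" using Q by (auto simp: closed_csubspace_def)
  have "cspan S \<subseteq> Q" using a Qs by (intro cspan_minimal) auto
  then have sub: "closure (cspan S) \<subseteq> Q" using \<open>closed Q\<close> by (rule closure_minimal)
  have "q \<in> closure (cspan S)" if "q \<in> Q" for q
  proof -
    have "closed_csubspace (closure (cspan S))"
      by (simp add: closed_csubspace_def closure_csubspace csubspace_cspan)
    from projection_exists[OF this, of q] obtain c where c: "c \<in> closure (cspan S)"
      "q - c \<in> orthogonal_complement (closure (cspan S))" by blast
    have "q - c \<in> Q" using that c sub csubspace_diff[OF Qs] by blast
    moreover have "\<forall>s\<in>S. cinner s (q - c) = 0"
      using c(2) cspan_superset closure_subset unfolding orthogonal_complement_def by blast
    ultimately have "q - c = 0" using a by blast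
    then show ?thesis using c by simp
  qed
  then show "closure (cspan S) = Q" using sub by blast
qed

section \<open>Orbits and trapped vectors\<close>

lemma is_adjoint_sym: "is_adjoint U Us \<Longrightarrow> is_adjoint Us U"
  unfolding is_adjoint_def by (metis cinner_commute)

lemma cinner_funpow_adjoint:
  assumes "is_adjoint U Us"
  shows "cinner ((U ^^ n) x) y = cinner x ((Us ^^ n) y)"
proof (induction n arbitrary: y)
  case (Suc n)
  have "cinner ((U ^^ Suc n) x) y = cinner ((U ^^ n) x) (Us y)"
    using assms by (simp add: is_adjoint_def)
  also have "\<dots> = cinner x ((Us ^^ Suc n) y)" by (simp add: Suc funpow_swap1)
  finally show ?case .
qed simp

definition orbit :: "('a \<Rightarrow> 'a) \<Rightarrow> 'a set \<Rightarrow> 'a set" where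
  "orbit U N = {(U ^^ n) x | n x. x \<in> N}"

definition trapped :: "'a set \<Rightarrow> ('a \<Rightarrow> 'a) \<Rightarrow> 'a set" where
  "trapped K U = {h. \<forall>n. (U ^^ n) h \<in> K}"

lemma trapped_subset: "trapped K U \<subseteq> K"
  unfolding trapped_def by (metis (mono_tags) funpow_0 mem_Collect_eq subsetI)

lemma trapped_invariant: "U ` trapped K U \<subseteq> trapped K U"
  unfolding trapped_def by (auto; metis comp_apply funpow_Suc_right)

lemma invariant_subset_trapped:
  assumes "L \<subseteq> K" and "U ` L \<subseteq> L"
  shows "L \<subseteq> trapped K U"
proof -
  have "(U ^^ n) h \<in> L" if "h \<in> L" for n h
    using that assms(2) by (induction n) auto
  then show ?thesis using assms(1) unfolding trapped_def by blast
qed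

text \<open>Since K is the orthogonal complement of N, the vectors trapped by the adjoint Us are
  exactly those orthogonal to the U-orbit of N.\<close>
lemma trapped_adjoint_eq_orbit_perp:
  fixes K :: "'a::chilbert_space set"
  assumes K: "closed_csubspace K" and adj: "is_adjoint U Us"
  shows "trapped K Us = {h. \<forall>s\<in>orbit U (orthogonal_complement K). cinner s h = 0}"
proof -
  have "(\<forall>s\<in>orbit U (orthogonal_complement K). cinner s h = 0) \<longleftrightarrow>
        (\<forall>n. \<forall>x\<in>orthogonal_complement K. cinner x ((Us ^^ n) h) = 0)" for h
    unfolding orbit_def cinner_funpow_adjoint[OF adj, symmetric] by blast
  then show ?thesis
    unfolding trapped_def orthogonal_complement_perp_iff[OF K] by blast
qed

lemma csubspace_trapped_adjoint:
  fixes K :: "'a::chilbert_space set"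
  assumes "closed_csubspace K" and "is_adjoint U Us"
  shows "csubspace (trapped K Us)"
  unfolding trapped_adjoint_eq_orbit_perp[OF assms] by (rule csubspace_orthogonal_to_set)

section \<open>The three characterizations\<close>

lemma N_minimal_iff_trapped:
  fixes K :: "'a::chilbert_space set"
  assumes K: "closed_csubspace K" and adj: "is_adjoint U Us"
  shows "N_minimal U (orthogonal_complement K) \<longleftrightarrow> trapped K Us = {0}"
proof -
  have "0 \<in> trapped K Us"
    using csubspace_trapped_adjoint[OF K adj] by (simp add: csubspace_iff)
  moreover have "closed_csubspace (UNIV :: 'a set)"
    by (simp add: closed_csubspace_def csubspace_iff)
  ultimately show ?thesis
    unfolding N_minimal_def orbit_def[symmetric] closure_cspan_eq_iff[OF \<open>closed_csubspace UNIV\<close>]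
      trapped_adjoint_eq_orbit_perp[OF K adj] by auto
qed

text \<open>If Us acts as A0 on K, the trapped vectors of Us form the largest A0-invariant subspace
  of K; hence A0 is simple iff Us traps no nonzero vector.\<close>
lemma simple_iff_trapped:
  fixes K :: "'a::chilbert_space set"
  assumes K: "closed_csubspace K" and adj: "is_adjoint U Us"
    and ext: "\<And>f. f \<in> K \<Longrightarrow> Us f = A0 f"
  shows "simple_on K A0 \<longleftrightarrow> trapped K Us = {0}"
proof -
  have A0_eq: "A0 ` L = Us ` L" if "L \<subseteq> K" for L
    using that ext by (intro image_cong) auto
  have sub: "csubspace (trapped K Us)" using csubspace_trapped_adjoint[OF K adj] .
  have inv: "A0 ` trapped K Us \<subseteq> trapped K Us"
    using A0_eq[OF trapped_subset] trapped_invariant by simp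
  show ?thesis
  proof
    assume "simple_on K A0"
    then have "\<not> trapped K Us \<noteq> {0}"
      using sub trapped_subset[of K Us] inv unfolding simple_on_def by blast
    then show "trapped K Us = {0}" by simp
  next
    assume trapped0: "trapped K Us = {0}"
    have "L = {0}" if "csubspace L" "L \<subseteq> K" "A0 ` L \<subseteq> L" for L
    proof -
      have "L \<subseteq> trapped K Us"
        using invariant_subset_trapped[of L K Us] that(2,3) A0_eq[OF that(2)] by simp
      moreover have "0 \<in> L" using that(1) by (simp add: csubspace_iff)
      ultimately show "L = {0}" using trapped0 by blast
    qed
    then show "simple_on K A0" unfolding simple_on_def by blast
  qed
qed

definition compression :: "'a::complex_inner set \<Rightarrow> ('a \<Rightarrow> 'a) \<Rightarrow> 'a \<Rightarrow> 'a" where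
  "compression K U x = oproj K (U x)"

lemma compression_in:
  fixes K :: "'a::chilbert_space set"
  assumes K: "closed_csubspace K"
  shows "compression K U z \<in> K"
  unfolding compression_def using oproj_props(1)[OF K] .

lemma funpow_compression_in:
  fixes K :: "'a::chilbert_space set"
  assumes K: "closed_csubspace K" and "z \<in> K"
  shows "(compression K U ^^ n) z \<in> K"
  using compression_in[OF K] \<open>z \<in> K\<close> by (cases n) simp_all

lemma cinner_compression:
  fixes K :: "'a::chilbert_space set"
  assumes K: "closed_csubspace K" and adj: "is_adjoint U Us" and "z \<in> K" "w \<in> K"
  shows "cinner (compression K U z) w = cinner z (compression K Us w)"
proof -
  have "cinner (compression K U z) w = cinner (U z) w"
    unfolding compression_def using cinner_oproj_left[OF K \<open>w \<in> K\<close>] .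
  also have "\<dots> = cinner z (Us w)" using adj by (simp add: is_adjoint_def)
  also have "\<dots> = cinner z (compression K Us w)"
    unfolding compression_def using cinner_oproj_right[OF K \<open>z \<in> K\<close>] by simp
  finally show ?thesis .
qed

lemma cinner_funpow_compression:
  fixes K :: "'a::chilbert_space set"
  assumes K: "closed_csubspace K" and adj: "is_adjoint U Us" and "z \<in> K" "w \<in> K"
  shows "cinner ((compression K U ^^ n) z) w = cinner z ((compression K Us ^^ n) w)"
  using \<open>w \<in> K\<close>
proof (induction n arbitrary: w)
  case (Suc n)
  have "cinner ((compression K U ^^ Suc n) z) w
        = cinner ((compression K U ^^ n) z) (compression K Us w)"
    using cinner_compression[OF K adj funpow_compression_in[OF K \<open>z \<in> K\<close>] Suc.prems] by simp
  also have "\<dots> = cinner z ((compression K Us ^^ Suc n) w)"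
    using Suc.IH[OF compression_in[OF K]] by (simp add: funpow_swap1)
  finally show ?case .
qed simp

lemma funpow_compression_eq:
  fixes K :: "'a::chilbert_space set"
  assumes K: "closed_csubspace K" and "\<forall>m<n. Us ((compression K Us ^^ m) h) \<in> K"
  shows "(compression K Us ^^ n) h = (Us ^^ n) h"
  using assms(2)
proof (induction n)
  case (Suc n)
  have "(compression K Us ^^ Suc n) h = oproj K (Us ((compression K Us ^^ n) h))"
    by (simp add: compression_def)
  also have "\<dots> = Us ((compression K Us ^^ n) h)"
    using Suc.prems oproj_id[OF K] by simp
  also have "\<dots> = (Us ^^ Suc n) h"
    using Suc by simp
  finally show ?case .
qed simp

lemma trapped_iff_compression:
  fixes K :: "'a::chilbert_space set"
  assumes K: "closed_csubspace K" and "h \<in> K"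
  shows "h \<in> trapped K Us \<longleftrightarrow> (\<forall>n. Us ((compression K Us ^^ n) h) \<in> K)"
proof
  assume "h \<in> trapped K Us"
  then have Suc_in_K: "(Us ^^ Suc n) h \<in> K" for n unfolding trapped_def by blast
  have "Us ((compression K Us ^^ n) h) \<in> K" for n
  proof (induction n rule: less_induct)
    case (less n)
    then have "(compression K Us ^^ n) h = (Us ^^ n) h"
      using funpow_compression_eq[OF K] by blast
    then show ?case using Suc_in_K[of n] by simp
  qed
  then show "\<forall>n. Us ((compression K Us ^^ n) h) \<in> K" ..
next
  assume orbit_in_K: "\<forall>n. Us ((compression K Us ^^ n) h) \<in> K"
  have "(Us ^^ n) h \<in> K" for n
  proof (cases n)
    case (Suc m)
    have "(compression K Us ^^ m) h = (Us ^^ m) h"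
      using orbit_in_K funpow_compression_eq[OF K] by blast
    then show ?thesis using orbit_in_K Suc by (metis funpow.simps(2) comp_apply)
  qed (simp add: \<open>h \<in> K\<close>)
  then show "h \<in> trapped K Us" unfolding trapped_def by blast
qed

lemma compression_orbit_dense_iff_trapped:
  fixes K :: "'a::chilbert_space set"
  assumes K: "closed_csubspace K" and adj: "is_adjoint U Us"
  shows "closure (cspan {(compression K U ^^ n) (compression K U x) | n x.
                          x \<in> orthogonal_complement K}) = K
         \<longleftrightarrow> trapped K Us = {0}"
    (is "closure (cspan ?S) = K \<longleftrightarrow> _")
proof -
  let ?A = "compression K U" and ?A' = "compression K Us"
  have A_in_K: "(?A ^^ n) (?A x) \<in> K" for n x
    using funpow_compression_in[OF K compression_in[OF K]] .
  have perp: "(\<forall>s\<in>?S. cinner s h = 0) \<longleftrightarrow> h \<in> trapped K Us" if "h \<in> K" for h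
  proof -
    have eq: "cinner ((?A ^^ n) (?A x)) h = cinner x (Us ((?A' ^^ n) h))" for n x
    proof -
      have "cinner ((?A ^^ n) (?A x)) h = cinner (?A x) ((?A' ^^ n) h)"
        using cinner_funpow_compression[OF K adj compression_in[OF K] that] .
      also have "\<dots> = cinner (U x) ((?A' ^^ n) h)"
        using cinner_oproj_left[OF K funpow_compression_in[OF K that], of "U x"]
        by (simp only: compression_def)
      also have "\<dots> = cinner x (Us ((?A' ^^ n) h))"
        using adj by (simp add: is_adjoint_def)
      finally show ?thesis .
    qed
    have "(\<forall>s\<in>?S. cinner s h = 0) \<longleftrightarrow>
          (\<forall>n. \<forall>x\<in>orthogonal_complement K. cinner ((?A ^^ n) (?A x)) h = 0)"
      by blast
    also have "\<dots> \<longleftrightarrow> (\<forall>n. \<forall>x\<in>orthogonal_complement K. cinner x (Us ((?A' ^^ n) h)) = 0)"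
      unfolding eq ..
    also have "\<dots> \<longleftrightarrow> h \<in> trapped K Us"
      unfolding orthogonal_complement_perp_iff[OF K] trapped_iff_compression[OF K that] ..
    finally show ?thesis .
  qed
  have "?S \<subseteq> K" using A_in_K by blast
  moreover have "0 \<in> trapped K Us"
    using csubspace_trapped_adjoint[OF K adj] by (simp add: csubspace_iff)
  moreover have "(\<forall>h\<in>K. (\<forall>s\<in>?S. cinner s h = 0) \<longrightarrow> h = 0) \<longleftrightarrow>
                 (\<forall>h\<in>K. h \<in> trapped K Us \<longrightarrow> h = 0)"
    using perp by simp
  ultimately show ?thesis
    unfolding closure_cspan_eq_iff[OF K] using trapped_subset[of K Us] by blast
qed

lemma pqs_minimal_compression:
  "pqs_minimal T Ts N K \<longleftrightarrow>
     closure (cspan {(compression K T ^^ n) (compression K T x) | n x. x \<in> N}) = K \<and>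
     closure (cspan {(compression K Ts ^^ n) (compression K Ts x) | n x. x \<in> N}) = K"
proof -
  have "compression K U = (\<lambda>x. oproj K (U x))" for U :: "'a \<Rightarrow> 'a"
    by (simp add: compression_def fun_eq_iff)
  then show ?thesis unfolding pqs_minimal_def Let_def by simp
qed

lemma pqs_minimal_iff_trapped:
  fixes K :: "'a::chilbert_space set"
  assumes K: "closed_csubspace K" and adj: "is_adjoint T Ts"
  shows "pqs_minimal T Ts (orthogonal_complement K) K \<longleftrightarrow>
         trapped K Ts = {0} \<and> trapped K T = {0}"
  unfolding pqs_minimal_compression compression_orbit_dense_iff_trapped[OF K adj]
    compression_orbit_dense_iff_trapped[OF K is_adjoint_sym[OF adj]] ..

theorem proposition7p1:
  fixes K :: "'a::chilbert_space set"
    and A0 T Ts :: "'a \<Rightarrow> 'a"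
  assumes "closed_csubspace K"
    and "hermitian_contraction_on K A0"
    and "is_adjoint T Ts"
    and "qsc_extension T Ts K A0"
  shows "(simple_on K A0 \<longleftrightarrow> N_minimal T (orthogonal_complement K)) \<and>
         (N_minimal T (orthogonal_complement K) \<longleftrightarrow>
            pqs_minimal T Ts (orthogonal_complement K) K)"
proof -
  note K = \<open>closed_csubspace K\<close> and adj = \<open>is_adjoint T Ts\<close>
  have Ts_ext: "\<And>f. f \<in> K \<Longrightarrow> Ts f = A0 f" and T_ext: "\<And>f. f \<in> K \<Longrightarrow> T f = A0 f"
    using \<open>qsc_extension T Ts K A0\<close> by (auto simp: qsc_extension_def)
  have "simple_on K A0 \<longleftrightarrow> trapped K Ts = {0}"
    using simple_iff_trapped[OF K adj Ts_ext] .
  moreover have "simple_on K A0 \<longleftrightarrow> trapped K T = {0}"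
    using simple_iff_trapped[OF K is_adjoint_sym[OF adj] T_ext] .
  moreover have "N_minimal T (orthogonal_complement K) \<longleftrightarrow> trapped K Ts = {0}"
    using N_minimal_iff_trapped[OF K adj] .
  moreover have "pqs_minimal T Ts (orthogonal_complement K) K \<longleftrightarrow>
                 trapped K Ts = {0} \<and> trapped K T = {0}"
    using pqs_minimal_iff_trapped[OF K adj] .
  ultimately show ?thesis by blast
qed

end
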